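(* Let $t>0$ and $k\ge 1$ be constants, and let $p_0,p_1,p_2,p_3$ be real numbers with $0<p_i<1$ and $\sum_{i=0}^{3}p_i=1$. Define $T(n,r)$ for real $n\ge 0$ and integers $r\ge 0$ by $$T(n,r)=\begin{cases}1 & \text{if } n\le t k^r,\\ 1+\sum_{i=0}^{3} T\big(p_i(n-tk^r),\,r+1\big) & \text{if } n> t k^r.\end{cases}$$ Then, as $N\to\infty$, $T(N,0)\in\Theta(N^s)$, where $s$ is a real number with $0< s\le \frac{\log 4}{\log 4k}$ (namely the solution of $\sum_{i=0}^{3}p_i^s=k^s$).
   Context: $T(N,0)$ is the asymptotic space (number of counters) used by a DN-tree with parameters $k$ and $t$ after recording $N$ extent accesses: a tree vertex at level $r$ saturates at threshold $tk^r$, after which further accesses are distributed among its four children with probabilities $p_0,\dots,p_3$. The parameters $t,k,p_i$ are fixed as $N\to\infty$. *)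

theory Defs
  imports Complex_Main "HOL-Library.Landau_Symbols"
begin

definition DN_rec :: "real \<Rightarrow> real \<Rightarrow> (nat \<Rightarrow> real) \<Rightarrow> (real \<Rightarrow> nat \<Rightarrow> real) \<Rightarrow> bool" where
  "DN_rec t k p T \<longleftrightarrow>
     (\<forall>n r. n \<ge> 0 \<longrightarrow>
        T n r = (if n \<le> t * k ^ r then 1
                 else 1 + (\<Sum>i<4. T (p i * (n - t * k ^ r)) (Suc r))))"

end

theory Submission
  imports Defs "HOL-Analysis.Analysis"
begin

text \<open>
  Measure a vertex of level \<open>r\<close> receiving \<open>n\<close> accesses by its load \<open>x = n / (t k\<^sup>r)\<close>.
  A saturated vertex passes the load \<open>(p\<^sub>i / k) (x - 1)\<close> to its \<open>i\<close>-th child, so with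
  \<open>q\<^sub>i = p\<^sub>i / k\<close> and \<open>\<Sum> q\<^sub>i\<^sup>s = 1\<close> the function \<open>x\<^sup>s\<close> is, up to constants, invariant
  under one splitting step. Subadditivity of \<open>x \<mapsto> x\<^sup>s\<close> for \<open>s \<le> 1\<close> absorbs the loss
  \<open>x - 1\<close> in the lower bound \<open>T \<ge> 4/5 x\<^sup>s + 1/5\<close>; in the upper bound \<open>T \<le> A x\<^sup>s - 1\<close>
  the constant \<open>A\<close> is chosen so large that even a single unsaturated child leaves
  enough room. Both bounds follow by induction on \<open>\<lceil>x\<rceil>\<close>. The bound on \<open>s\<close> is
  concavity: \<open>(4k)\<^sup>s = \<Sum> (4p\<^sub>i)\<^sup>s \<le> 4\<close>.
\<close>

lemma powr_add_le:
  fixes a b s :: real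
  assumes "0 < s" "s \<le> 1" "0 \<le> a" "0 \<le> b"
  shows "(a + b) powr s \<le> a powr s + b powr s"
proof (cases "a + b = 0")
  case True
  then show ?thesis using assms by simp
next
  case False
  hence ab: "a + b > 0" using assms by simp
  have le_powr: "u \<le> u powr s" if "0 \<le> u" "u \<le> 1" for u :: real
  proof (cases "u = 0")
    case False
    hence "u powr 1 \<le> u powr s" using that assms by (intro powr_mono') auto
    thus ?thesis using False that by simp
  qed simp
  have "1 = a / (a + b) + b / (a + b)" using ab by (simp flip: add_divide_distrib)
  also have "\<dots> \<le> (a / (a + b)) powr s + (b / (a + b)) powr s"
    using ab assms by (intro add_mono le_powr) auto
  also have "\<dots> = (a powr s + b powr s) / (a + b) powr s"
    using assms by (simp add: powr_divide add_divide_distrib)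
  finally show ?thesis using ab by (simp add: field_simps)
qed

lemma powr_sum_eq_exists:
  fixes p :: "'a \<Rightarrow> real"
  assumes "finite I" "2 \<le> card I" "\<And>i. i \<in> I \<Longrightarrow> 0 < p i" "sum p I \<le> k"
  shows "\<exists>s. 0 < s \<and> s \<le> 1 \<and> (\<Sum>i\<in>I. p i powr s) = k powr s"
proof -
  have "I \<noteq> {}" using assms(2) by auto
  hence "0 < k" using assms by (smt (verit) sum_pos)
  define f where "f s = (\<Sum>i\<in>I. p i powr s) - k powr s" for s :: real
  have "continuous_on {0..1} f"
    unfolding f_def using \<open>0 < k\<close> by (intro continuous_intros) (fastforce dest: assms(3))+
  moreover have f0: "f 0 = real (card I) - 1"
    unfolding f_def using \<open>0 < k\<close> assms(3) by (simp add: less_imp_neq[symmetric])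
  moreover have "f 1 \<le> 0"
    unfolding f_def using assms(3,4) \<open>0 < k\<close> by (simp add: less_imp_le)
  ultimately obtain s where "0 \<le> s" "s \<le> 1" "f s = 0"
    using IVT2'[of f 1 0 0] assms(2) by auto
  moreover have "s \<noteq> 0" using f0 \<open>f s = 0\<close> assms(2) by auto
  ultimately show ?thesis unfolding f_def by (intro exI[of _ s]) auto
qed

text \<open>Concavity of \<open>x \<mapsto> x\<^sup>s\<close>, in the form of Young's inequality \<open>y\<^sup>s \<le> s y + (1 - s)\<close>.\<close>
lemma powr_sum_eq_exponent_le:
  fixes p :: "'a \<Rightarrow> real" and k s :: real
  assumes "finite I" "2 \<le> card I" "\<And>i. i \<in> I \<Longrightarrow> 0 < p i" "sum p I = 1"
    and "1 \<le> k" "0 \<le> s" "s \<le> 1" "(\<Sum>i\<in>I. p i powr s) = k powr s"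
  shows "s \<le> ln (card I) / ln (card I * k)"
proof -
  define d where "d = real (card I)"
  have d: "2 \<le> d" using assms(2) by (simp add: d_def)
  have "(\<Sum>i\<in>I. (d * p i) powr s) \<le> (\<Sum>i\<in>I. s * (d * p i) + (1 - s))"
    using Youngs_inequality_0[of s "1 - s" "d * _" 1] assms(3,6,7) d
    by (intro sum_mono) auto
  also have "\<dots> = d"
    using assms(4) by (simp add: sum.distrib flip: sum_distrib_left) (simp add: d_def algebra_simps)
  finally have "(d * k) powr s \<le> d"
    using assms(3,5,8) d by (simp add: powr_mult flip: sum_distrib_left)
  hence "ln ((d * k) powr s) \<le> ln d"
    using assms(5) d by (subst ln_le_cancel_iff) auto
  hence "s * ln (d * k) \<le> ln d"
    using assms(5) d by (simp add: ln_powr)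
  moreover have "0 < ln (d * k)"
    using mult_mono[of 2 d 1 k] d assms(5) by (intro ln_gt_zero) simp
  ultimately show ?thesis by (simp add: d_def pos_le_divide_eq)
qed

text \<open>
  The counting step of the upper bound: each child contributes either \<open>1\<close> (it is a
  leaf) or \<open>c\<^sub>i - 1\<close>; a leaf is paid for by the slack \<open>W - \<Sum> c\<^sub>i + c\<^sub>j\<close>.
\<close>
lemma one_plus_sum_le_if_leaf_or_bounded:
  fixes b c :: "'a \<Rightarrow> real"
  assumes "finite I" "2 \<le> card I"
    and leaf_or_bounded: "\<And>i. i \<in> I \<Longrightarrow> b i \<le> 1 \<or> b i \<le> c i - 1"
    and "\<And>i. i \<in> I \<Longrightarrow> 0 \<le> c i" "sum c I \<le> W"
    and slack: "\<And>j. j \<in> I \<Longrightarrow> card I + 2 \<le> W - sum c I + c j"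
  shows "1 + sum b I \<le> W - 1"
proof (cases "\<forall>i\<in>I. b i \<le> c i - 1")
  case True
  hence "sum b I \<le> (\<Sum>i\<in>I. c i - 1)" by (intro sum_mono) auto
  also have "\<dots> = sum c I - card I" by (simp add: sum_subtractf)
  finally show ?thesis using assms(2,5) by linarith
next
  case False
  then obtain j where j: "j \<in> I" "b j \<le> 1" using leaf_or_bounded by auto
  have "sum b I = b j + sum b (I - {j})" using assms(1) j(1) by (simp add: sum.remove)
  also have "\<dots> \<le> 1 + (\<Sum>i\<in>I - {j}. c i + 1)"
    using j(2) leaf_or_bounded assms(4) by (intro add_mono sum_mono) force+
  also have "\<dots> = 1 + sum c I - c j + (real (card I) - 1)"
    using assms(1,2) j(1) by (simp add: sum.distrib sum_diff1 of_nat_diff)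
  finally show ?thesis using slack[OF j(1)] by linarith
qed

locale DN_tree =
  fixes t k :: real and p :: "nat \<Rightarrow> real" and T :: "real \<Rightarrow> nat \<Rightarrow> real"
  assumes t_pos: "0 < t" and k_ge_1: "1 \<le> k"
    and p_pos: "i < 4 \<Longrightarrow> 0 < p i" and p_less_1: "i < 4 \<Longrightarrow> p i < 1"
    and T_rec: "DN_rec t k p T"
begin

definition load :: "real \<Rightarrow> nat \<Rightarrow> real" where
  "load n r = n / (t * k ^ r)"

lemma threshold_pos: "0 < t * k ^ r"
  using t_pos k_ge_1 by simp

lemma T_leaf: "0 \<le> n \<Longrightarrow> n \<le> t * k ^ r \<Longrightarrow> T n r = 1"
  using T_rec unfolding DN_rec_def by simp

lemma T_split:
  "t * k ^ r < n \<Longrightarrow> T n r = 1 + (\<Sum>i<4. T (p i * (n - t * k ^ r)) (Suc r))"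
  using T_rec threshold_pos unfolding DN_rec_def
  by (metis less_eq_real_def not_le order.strict_trans1)

lemma load_le_1_iff: "load n r \<le> 1 \<longleftrightarrow> n \<le> t * k ^ r"
  using threshold_pos by (simp add: load_def)

lemma load_child: "load (p i * (n - t * k ^ r)) (Suc r) = p i / k * (load n r - 1)"
  using t_pos k_ge_1 by (simp add: load_def field_simps)

lemma load_child_le:
  assumes "i < 4" "t * k ^ r < n"
  shows "load (p i * (n - t * k ^ r)) (Suc r) \<le> load n r - 1"
proof -
  have "0 < p i" "p i < 1" using p_pos p_less_1 assms(1) by auto
  hence "p i / k \<le> 1" "0 \<le> p i / k" using k_ge_1 by auto
  moreover have "0 \<le> load n r - 1" using assms(2) load_le_1_iff[of n r] by simp
  ultimately show ?thesis unfolding load_child by (metis mult_left_le_one_le)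
qed

lemma DN_induct[consumes 1, case_names leaf split]:
  assumes "0 \<le> n"
    and leaf: "\<And>n r. 0 \<le> n \<Longrightarrow> n \<le> t * k ^ r \<Longrightarrow> P n r"
    and split: "\<And>n r. t * k ^ r < n \<Longrightarrow> (\<And>i. i < 4 \<Longrightarrow> P (p i * (n - t * k ^ r)) (Suc r))
                  \<Longrightarrow> P n r"
  shows "P n r"
proof -
  have "\<forall>n r. 0 \<le> n \<longrightarrow> load n r \<le> real m \<longrightarrow> P n r" for m
  proof (induction m)
    case 0
    then show ?case by (auto intro: leaf simp flip: load_le_1_iff)
  next
    case (Suc m)
    show ?case
    proof (intro allI impI)
      fix n r assume n: "0 \<le> n" "load n r \<le> real (Suc m)"
      show "P n r"
      proof (cases "n \<le> t * k ^ r")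
        case False
        hence "t * k ^ r < n" by simp
        moreover have "P (p i * (n - t * k ^ r)) (Suc r)" if "i < 4" for i
        proof -
          have "0 \<le> p i * (n - t * k ^ r)" using p_pos[OF that] \<open>t * k ^ r < n\<close> by simp
          moreover have "load (p i * (n - t * k ^ r)) (Suc r) \<le> real m"
            using load_child_le[OF that \<open>t * k ^ r < n\<close>] n(2) by simp
          ultimately show ?thesis using Suc.IH by blast
        qed
        ultimately show ?thesis by (rule split)
      qed (use n leaf in auto)
    qed
  qed
  thus ?thesis using assms(1) real_nat_ceiling_ge by blast
qed

end

locale DN_tree_exponent = DN_tree +
  fixes s :: real
  assumes s_pos: "0 < s" and s_le_1: "s \<le> 1"
    and exponent_eq: "(\<Sum>i<4. (p i / k) powr s) = 1"
begin

lemma load_child_powr: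
  assumes "i < 4" "t * k ^ r < n"
  shows "load (p i * (n - t * k ^ r)) (Suc r) powr s = (p i / k) powr s * (load n r - 1) powr s"
  using p_pos[OF assms(1)] assms(2) load_le_1_iff[of n r] k_ge_1 unfolding load_child
  by (subst powr_mult) auto

lemma T_lower: "0 \<le> n \<Longrightarrow> 4/5 * load n r powr s + 1/5 \<le> T n r"
proof (induction n r rule: DN_induct)
  case (leaf n r)
  have "load n r powr s \<le> 1"
    using leaf load_le_1_iff[of n r] threshold_pos[of r] s_pos
    by (intro powr_le1) (auto simp: load_def)
  thus ?case using T_leaf[OF leaf] by simp
next
  case (split n r)
  define x where "x = load n r"
  have "1 < x" using split(1) load_le_1_iff[of n r] by (simp add: x_def)
  have "4/5 * (x - 1) powr s + 4/5 = 4/5 * (x - 1) powr s * (\<Sum>i<4. (p i / k) powr s) + 4/5"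
    by (simp add: exponent_eq)
  also have "\<dots> = (\<Sum>i<4. 4/5 * ((p i / k) powr s * (x - 1) powr s) + 1/5)"
    by (simp add: sum.distrib sum_distrib_left sum_distrib_right algebra_simps)
  also have "\<dots> \<le> (\<Sum>i<4. T (p i * (n - t * k ^ r)) (Suc r))"
    using split(2) load_child_powr[OF _ split(1)] by (intro sum_mono) (simp add: x_def)
  finally have "4/5 * (x - 1) powr s + 4/5 \<le> T n r - 1"
    using T_split[OF split(1)] by simp
  moreover have "x powr s \<le> (x - 1) powr s + 1"
    using powr_add_le[OF s_pos s_le_1, of "x - 1" 1] \<open>1 < x\<close> by simp
  ultimately show ?case by (simp add: x_def)
qed

text \<open>The factor \<open>6\<close> is the slack \<open>card I + 2\<close> needed for four children.\<close>
definition upper_const :: real where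
  "upper_const = 6 * (\<Sum>i<4. (k / p i) powr s)"

lemma upper_const_pos: "0 < upper_const"
  unfolding upper_const_def using k_ge_1
  by (intro mult_pos_pos sum_pos) (auto simp: lessThan_empty_iff dest: p_pos)

lemma upper_const_child: "i < 4 \<Longrightarrow> 6 \<le> upper_const * (p i / k) powr s"
proof -
  assume "i < 4"
  have "6 = 6 * ((k / p i) powr s * (p i / k) powr s)"
    using p_pos[OF \<open>i < 4\<close>] k_ge_1 by (simp flip: powr_mult)
  also have "\<dots> \<le> 6 * ((\<Sum>i<4. (k / p i) powr s) * (p i / k) powr s)"
    using \<open>i < 4\<close> by (intro mult_right_mono mult_left_mono member_le_sum) auto
  finally show ?thesis unfolding upper_const_def by (simp add: mult.assoc)
qed

lemma T_upper: "0 \<le> n \<Longrightarrow> n \<le> t * k ^ r \<or> T n r \<le> upper_const * load n r powr s - 1"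
proof (induction n r rule: DN_induct)
  case (split n r)
  define x where "x = load n r"
  define A where "A = upper_const"
  define b where "b i = T (p i * (n - t * k ^ r)) (Suc r)" for i
  define c where "c i = A * ((p i / k) powr s * (x - 1) powr s)" for i
  have "1 < x" using split(1) load_le_1_iff[of n r] by (simp add: x_def)
  have "0 < A" using upper_const_pos by (simp add: A_def)
  have sum_c: "(\<Sum>i<4. c i) = A * (x - 1) powr s"
    unfolding c_def by (simp flip: sum_distrib_left sum_distrib_right add: exponent_eq)
  have x_mono: "(x - 1) powr s \<le> x powr s"
    using \<open>1 < x\<close> s_pos by (intro powr_mono2) auto
  have "1 + (\<Sum>i<4. b i) \<le> A * x powr s - 1"
  proof (rule one_plus_sum_le_if_leaf_or_bounded)
    fix i :: nat assume "i \<in> {..<4}"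
    hence i: "i < 4" by simp
    have "0 \<le> p i * (n - t * k ^ r)" using p_pos[OF i] split(1) by simp
    thus "b i \<le> 1 \<or> b i \<le> c i - 1"
      using split(2)[OF i] T_leaf load_child_powr[OF i split(1)]
      by (auto simp: b_def c_def x_def A_def)
    show "0 \<le> c i" using \<open>0 < A\<close> by (simp add: c_def)
    have "(p i / k) powr s \<le> 1"
      using p_pos[OF i] p_less_1[OF i] k_ge_1 s_pos by (intro powr_le1) auto
    hence "0 \<le> A * (x powr s - (x - 1) powr s) * (1 - (p i / k) powr s)"
      using \<open>0 < A\<close> x_mono by simp
    also have "\<dots> = A * x powr s - (\<Sum>i<4. c i) + c i - A * x powr s * (p i / k) powr s"
      unfolding sum_c by (simp add: c_def algebra_simps)
    finally have "A * x powr s * (p i / k) powr s \<le> A * x powr s - (\<Sum>i<4. c i) + c i"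
      by simp
    moreover have "A * (p i / k) powr s \<le> A * x powr s * (p i / k) powr s"
      using \<open>0 < A\<close> \<open>1 < x\<close> s_pos by (simp add: mult_right_mono ge_one_powr_ge_zero)
    ultimately show "real (card {..<4::nat} + 2) \<le> A * x powr s - (\<Sum>i<4. c i) + c i"
      using upper_const_child[OF i] by (simp add: A_def)
  qed (use sum_c x_mono \<open>0 < A\<close> in \<open>auto intro: mult_left_mono\<close>)
  thus ?case using T_split[OF split(1)] by (simp add: b_def A_def x_def)
qed simp

lemma T_root_bigtheta: "(\<lambda>N. T N 0) \<in> \<Theta>[at_top](\<lambda>N. N powr s)"
proof (rule bigthetaI')
  show "0 < 4/5 / t powr s" "0 < upper_const / t powr s"
    using t_pos upper_const_pos by simp_all
  show "\<forall>\<^sub>F N in at_top. 4/5 / t powr s * norm (N powr s) \<le> norm (T N 0) \<and>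
                        norm (T N 0) \<le> upper_const / t powr s * norm (N powr s)"
    using eventually_gt_at_top[of t]
  proof eventually_elim
    case (elim N)
    have "0 \<le> N" using elim t_pos by simp
    have load: "load N 0 powr s = N powr s / t powr s"
      using elim t_pos by (simp add: load_def powr_divide)
    have lower: "4/5 * (N powr s / t powr s) + 1/5 \<le> T N 0"
      using T_lower[OF \<open>0 \<le> N\<close>, of 0] unfolding load .
    have "N \<le> t * k ^ 0 \<or> T N 0 \<le> upper_const * (N powr s / t powr s) - 1"
      using T_upper[OF \<open>0 \<le> N\<close>, of 0] unfolding load .
    hence upper: "T N 0 \<le> upper_const * (N powr s / t powr s)"
      using elim by auto
    have "0 \<le> N powr s / t powr s" by simp
    hence "0 \<le> T N 0" using lower by linarith
    thus ?case using lower upper by simp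
  qed
qed

end

theorem theorem2:
  fixes t k :: real and p :: "nat \<Rightarrow> real" and T :: "real \<Rightarrow> nat \<Rightarrow> real"
  assumes "t > 0" and "k \<ge> 1"
    and "\<forall>i<4. 0 < p i \<and> p i < 1"
    and "(\<Sum>i<4. p i) = 1"
    and "DN_rec t k p T"
  shows "\<exists>s::real. 0 < s \<and> s \<le> ln 4 / ln (4 * k) \<and>
           (\<Sum>i<4. p i powr s) = k powr s \<and>
           (\<lambda>N. T N 0) \<in> \<Theta>[at_top](\<lambda>N. N powr s)"
proof -
  interpret DN_tree t k p T
    using assms by unfold_locales auto
  obtain s where s: "0 < s" "s \<le> 1" and eq: "(\<Sum>i<4. p i powr s) = k powr s"
    using powr_sum_eq_exists[of "{..<4}" p k] assms(2-4) by auto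
  have bound: "s \<le> ln 4 / ln (4 * k)"
    using powr_sum_eq_exponent_le[of "{..<4}" p k s] assms(2-4) s eq by simp
  have "(\<Sum>i<4. (p i / k) powr s) = 1"
    using eq assms(2,3) by (simp add: powr_divide flip: sum_divide_distrib)
  then interpret DN_tree_exponent t k p T s
    using s by unfold_locales
  show ?thesis
    using s eq bound T_root_bigtheta by (intro exI[of _ s]) simp
qed

end
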